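(* Let $\mathcal G$ be a good pseudogroup on a compact metric space $X$ with good generating set $\mathcal G_1$, and suppose the compacted generating set $\mathcal G_2$ is symmetric. Then every Borel probability measure $\mu$ on $X$ which is $\mathcal G$-invariant, ergodic and $(\mathcal G,\mathcal G_2)$-homogeneous, and whose local upper measure entropy $\overline{h}_\mu((\mathcal G,\mathcal G_2),x)$ is positive for every $x\in X$, is $(\mathcal G,\mathcal G_1)$-expansive.
   Context: $\mathrm{Homeo}(X)$: homeomorphisms $g:D_g\to R_g$ between open subsets of $X$, composed on natural domains $D_{h\circ g}=g^{-1}(D_h)$; $g(A)$ means $g(A\cap D_g)$. A pseudogroup is a subset of $\mathrm{Homeo}(X)$ containing $\mathrm{id}_X$, closed under composition, inversion, restriction to open subsets, and gluing along open covers of the domain. $\Gamma$ generates $\mathcal G$ if $\bigcup_{g\in\Gamma}(D_g\cup R_g)=X$ and $\mathcal G$ is exactly the set of $g\in\mathrm{Homeo}(X)$ locally equal near each point of $D_g$ to a finite composition of elements of $\Gamma$ and their inverses; $\Gamma$ is symmetric if it contains $\mathrm{id}_X$ and is closed under inverses. A finite symmetric generating set $\mathcal G_1$ is good if for each $g\in\mathcal G_1$ there is a compact $K_g\subset D_g$ such that $\mathcal G_2=\{g|_{\mathrm{int}(K_g)}:g\in\mathcal G_1\}$ still generates $\mathcal G$ ($\mathcal G_2$ is the compacted generating set; $\mathcal G$ is good if it has a good generating set). For $i=1,2$: $\mathcal G^i_n=\{h_1\circ\cdots\circ h_n:h_j\in\mathcal G_i\}$, $\mathcal G^{i,x}_n=\{g\in\mathcal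 G^i_n:x\in D_g\}$, $B^i_n(x,\varepsilon)=\{y:d(g(x),g(y))<\varepsilon\ \forall g\in\mathcal G^{i,x}_n\cap\mathcal G^{i,y}_n\}$, $\Phi^i_\delta(x)=\{y:d(g(x),g(y))\le\delta\ \forall n,\ \forall g\in\mathcal G^{i,x}_n\cap\mathcal G^{i,y}_n\}$. $\mu$ is $\mathcal G$-invariant if $\mu(g(A))=\mu(A)$ for all $g\in\mathcal G$ and Borel $A\subset D_g$; it is ergodic if every Borel $A$ with $g(A\cap D_g)\subset A$ for all $g\in\mathcal G$ has $\mu(A)\in\{0,1\}$. $\mu$ is $(\mathcal G,\mathcal G_2)$-homogeneous if $\mu(K)<\infty$ for compact $K$, some compact $K_0$ has $\mu(K_0)>0$, and for every $\varepsilon>0$ there are $\delta,c>0$ with $\mu(B^2_n(y,\delta))\le c\,\mu(B^2_n(x,\varepsilon))$ for all $n,x,y$. $\overline{h}_\mu((\mathcal G,\mathcal G_2),x)=\lim_{\varepsilon\to0}\limsup_{n\to\infty}-\frac1n\log\mu(B^2_n(x,\varepsilon))$. $\mu$ is $(\mathcal G,\mathcal G_1)$-expansive if there is $\delta>0$ with $\mu(\Phi^1_\delta(x))=0$ for all $x\in X$. *)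

theory Defs
  imports "HOL-Probability.Probability"
begin

text \<open>Partial maps of the ambient space (the type 'a, whose UNIV plays the role of X)
are represented as 'a \<rightharpoonup> 'a; the domain D_g is dom g and the range R_g is ran g.
Composition on natural domains is map composition, identity id_X is Some.\<close>

definition pval :: "('a \<rightharpoonup> 'a) \<Rightarrow> 'a \<Rightarrow> 'a" where
  "pval g x = the (g x)"

definition is_phomeo :: "('a::topological_space \<rightharpoonup> 'a) \<Rightarrow> bool" where
  "is_phomeo g \<longleftrightarrow> open (dom g) \<and> open (ran g) \<and>
     (\<exists>h. homeomorphism (dom g) (ran g) (pval g) h)"

definition pinv :: "('a \<rightharpoonup> 'a) \<Rightarrow> ('a \<rightharpoonup> 'a)" where
  "pinv g = (\<lambda>y. if y \<in> ran g then Some (THE x. g x = Some y) else None)"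

definition pimage :: "('a \<rightharpoonup> 'a) \<Rightarrow> 'a set \<Rightarrow> 'a set" where
  "pimage g A = pval g ` (A \<inter> dom g)"

text \<open>h_1 \<circ> ... \<circ> h_n for the list [h_1,...,h_n]\<close>
definition pcomp :: "('a \<rightharpoonup> 'a) list \<Rightarrow> ('a \<rightharpoonup> 'a)" where
  "pcomp hs = foldr (\<lambda>h acc. h \<circ>\<^sub>m acc) hs Some"

definition pseudogroup :: "('a::topological_space \<rightharpoonup> 'a) set \<Rightarrow> bool" where
  "pseudogroup G \<longleftrightarrow>
     G \<subseteq> {g. is_phomeo g} \<and>
     Some \<in> G \<and>
     (\<forall>g\<in>G. \<forall>h\<in>G. h \<circ>\<^sub>m g \<in> G) \<and>
     (\<forall>g\<in>G. pinv g \<in> G) \<and>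
     (\<forall>g\<in>G. \<forall>U. open U \<longrightarrow> g |` U \<in> G) \<and>
     (\<forall>g. is_phomeo g \<longrightarrow>
        (\<forall>x\<in>dom g. \<exists>U. open U \<and> x \<in> U \<and> U \<subseteq> dom g \<and> g |` U \<in> G) \<longrightarrow> g \<in> G)"

definition generates :: "('a::topological_space \<rightharpoonup> 'a) set \<Rightarrow> ('a \<rightharpoonup> 'a) set \<Rightarrow> bool" where
  "generates \<Gamma> G \<longleftrightarrow>
     \<Gamma> \<subseteq> {g. is_phomeo g} \<and>
     (\<Union>g\<in>\<Gamma>. dom g \<union> ran g) = UNIV \<and>
     G = {g. is_phomeo g \<and>
            (\<forall>x\<in>dom g. \<exists>U. open U \<and> x \<in> U \<and> U \<subseteq> dom g \<and>
               (\<exists>hs. hs \<noteq> [] \<and> set hs \<subseteq> \<Gamma> \<union> pinv ` \<Gamma> \<and>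
                     U \<subseteq> dom (pcomp hs) \<and> (\<forall>y\<in>U. g y = pcomp hs y)))}"

definition symmetric_set :: "('a \<rightharpoonup> 'a) set \<Rightarrow> bool" where
  "symmetric_set \<Gamma> \<longleftrightarrow> Some \<in> \<Gamma> \<and> (\<forall>g\<in>\<Gamma>. pinv g \<in> \<Gamma>)"

text \<open>good generating set G1 with chosen compacts K; G2 is the compacted generating set\<close>
definition compacted :: "('a \<rightharpoonup> 'a) set \<Rightarrow> (('a::topological_space \<rightharpoonup> 'a) \<Rightarrow> 'a set) \<Rightarrow> ('a \<rightharpoonup> 'a) set" where
  "compacted G1 K = (\<lambda>g. g |` interior (K g)) ` G1"

definition good_gen_set ::
  "('a::topological_space \<rightharpoonup> 'a) set \<Rightarrow> ('a \<rightharpoonup> 'a) set \<Rightarrow> (('a \<rightharpoonup> 'a) \<Rightarrow> 'a set) \<Rightarrow> bool" where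
  "good_gen_set G G1 K \<longleftrightarrow> finite G1 \<and> symmetric_set G1 \<and> generates G1 G \<and>
     (\<forall>g\<in>G1. compact (K g) \<and> K g \<subseteq> dom g) \<and> generates (compacted G1 K) G"

definition comps :: "('a \<rightharpoonup> 'a) set \<Rightarrow> nat \<Rightarrow> ('a \<rightharpoonup> 'a) set" where
  "comps \<Gamma> n = {pcomp hs | hs. set hs \<subseteq> \<Gamma> \<and> length hs = n}"

definition dyn_ball :: "('a::metric_space \<rightharpoonup> 'a) set \<Rightarrow> nat \<Rightarrow> 'a \<Rightarrow> real \<Rightarrow> 'a set" where
  "dyn_ball \<Gamma> n x \<epsilon> = {y. \<forall>g\<in>comps \<Gamma> n. x \<in> dom g \<and> y \<in> dom g \<longrightarrow>
                                  dist (pval g x) (pval g y) < \<epsilon>}"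

definition Phi_set :: "('a::metric_space \<rightharpoonup> 'a) set \<Rightarrow> real \<Rightarrow> 'a \<Rightarrow> 'a set" where
  "Phi_set \<Gamma> \<delta> x = {y. \<forall>n. \<forall>g\<in>comps \<Gamma> n. x \<in> dom g \<and> y \<in> dom g \<longrightarrow>
                                  dist (pval g x) (pval g y) \<le> \<delta>}"

definition invariant_measure :: "('a \<rightharpoonup> 'a) set \<Rightarrow> 'a measure \<Rightarrow> bool" where
  "invariant_measure G \<mu> \<longleftrightarrow>
     (\<forall>g\<in>G. \<forall>A\<in>sets \<mu>. A \<subseteq> dom g \<longrightarrow> emeasure \<mu> (pimage g A) = emeasure \<mu> A)"

definition ergodic_measure :: "('a \<rightharpoonup> 'a) set \<Rightarrow> 'a measure \<Rightarrow> bool" where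
  "ergodic_measure G \<mu> \<longleftrightarrow>
     (\<forall>A\<in>sets \<mu>. (\<forall>g\<in>G. pimage g A \<subseteq> A) \<longrightarrow> emeasure \<mu> A = 0 \<or> emeasure \<mu> A = 1)"

definition homogeneous_measure :: "('a::metric_space \<rightharpoonup> 'a) set \<Rightarrow> 'a measure \<Rightarrow> bool" where
  "homogeneous_measure G2 \<mu> \<longleftrightarrow>
     (\<forall>K. compact K \<longrightarrow> emeasure \<mu> K < \<infinity>) \<and>
     (\<exists>K0. compact K0 \<and> emeasure \<mu> K0 > 0) \<and>
     (\<forall>\<epsilon>>0. \<exists>\<delta>>0. \<exists>c>0. \<forall>n x y.
        measure \<mu> (dyn_ball G2 n y \<delta>) \<le> c * measure \<mu> (dyn_ball G2 n x \<epsilon>))"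

definition ent_term :: "('a::metric_space \<rightharpoonup> 'a) set \<Rightarrow> 'a measure \<Rightarrow> 'a \<Rightarrow> real \<Rightarrow> nat \<Rightarrow> ereal" where
  "ent_term G2 \<mu> x \<epsilon> n =
     (if measure \<mu> (dyn_ball G2 n x \<epsilon>) = 0 then \<infinity>
      else ereal (- ln (measure \<mu> (dyn_ball G2 n x \<epsilon>)) / real n))"

definition upper_local_entropy :: "('a::metric_space \<rightharpoonup> 'a) set \<Rightarrow> 'a measure \<Rightarrow> 'a \<Rightarrow> ereal" where
  "upper_local_entropy G2 \<mu> x =
     Lim (at_right (0::real)) (\<lambda>\<epsilon>. limsup (ent_term G2 \<mu> x \<epsilon>))"

definition expansive_measure :: "('a::metric_space \<rightharpoonup> 'a) set \<Rightarrow> 'a measure \<Rightarrow> bool" where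
  "expansive_measure G1 \<mu> \<longleftrightarrow> (\<exists>\<delta>>0. \<forall>x. measure \<mu> (Phi_set G1 \<delta> x) = 0)"

end

theory Submission
  imports Defs
begin

(* Suppose \<mu> is not expansive. Every G2-composition is a restriction of a G1-composition of
   the same length, so the Phi-set of G1 at y of radius \<delta>/2 lies in every dynamical ball
   B^2_n(y,\<delta>). Choosing y with \<mu>(Phi) > 0, homogeneity bounds \<mu>(B^2_n(x,\<epsilon>)) from below
   by a positive constant independent of n and x, so -(1/n) log \<mu>(B^2_n(x,\<epsilon>)) tends to 0
   and the local upper entropy vanishes everywhere. *)

definition continuous_pmap :: "('a::topological_space \<rightharpoonup> 'a) \<Rightarrow> bool" where
  "continuous_pmap g \<longleftrightarrow> open (dom g) \<and> continuous_on (dom g) (pval g)"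

lemma is_phomeo_imp_continuous_pmap: "is_phomeo g \<Longrightarrow> continuous_pmap g"
  unfolding is_phomeo_def continuous_pmap_def homeomorphism_def by auto

lemma continuous_pmap_map_comp:
  assumes h: "continuous_pmap h" and g: "continuous_pmap g"
  shows "continuous_pmap (h \<circ>\<^sub>m g)"
proof -
  have dom_comp: "dom (h \<circ>\<^sub>m g) = dom g \<inter> pval g -` dom h"
    by (auto simp: map_comp_def pval_def split: option.splits)
  have "open (dom (h \<circ>\<^sub>m g))"
    unfolding dom_comp using g h unfolding continuous_pmap_def
    by (intro continuous_open_preimage) auto
  moreover have "continuous_on (dom (h \<circ>\<^sub>m g)) (pval h \<circ> pval g)"
    using g h unfolding continuous_pmap_def dom_comp
    by (intro continuous_on_compose) (auto intro: continuous_on_subset)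
  moreover have "pval (h \<circ>\<^sub>m g) x = (pval h \<circ> pval g) x" if "x \<in> dom (h \<circ>\<^sub>m g)" for x
    using that by (auto simp: map_comp_def pval_def split: option.splits)
  ultimately show ?thesis
    unfolding continuous_pmap_def using continuous_on_cong by blast
qed

lemma continuous_pmap_pcomp: "set hs \<subseteq> {g. is_phomeo g} \<Longrightarrow> continuous_pmap (pcomp hs)"
proof (induction hs)
  case Nil
  show ?case by (simp add: pcomp_def continuous_pmap_def pval_def continuous_on_id)
next
  case (Cons h hs)
  then show ?case
    by (simp add: pcomp_def continuous_pmap_map_comp is_phomeo_imp_continuous_pmap)
qed

lemma finite_comps:
  assumes "finite \<Gamma>"
  shows "finite (comps \<Gamma> n)"
proof -
  have "comps \<Gamma> n = pcomp ` {hs. set hs \<subseteq> \<Gamma> \<and> length hs = n}"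
    by (auto simp: comps_def)
  then show ?thesis using finite_lists_length_eq[OF assms] by simp
qed

lemma dyn_ball_in_borel:
  fixes \<Gamma> :: "('a::metric_space \<rightharpoonup> 'a) set"
  assumes "finite \<Gamma>" and phomeo: "\<Gamma> \<subseteq> {g. is_phomeo g}"
  shows "dyn_ball \<Gamma> n x \<epsilon> \<in> sets borel"
proof -
  define S where "S g = {y. x \<in> dom g \<and> y \<in> dom g \<longrightarrow> dist (pval g x) (pval g y) < \<epsilon>}" for g
  have ball_eq: "dyn_ball \<Gamma> n x \<epsilon> = UNIV \<inter> (\<Inter>g\<in>comps \<Gamma> n. S g)"
    by (auto simp: dyn_ball_def S_def)
  have "S g \<in> sets borel" if "g \<in> comps \<Gamma> n" for g
  proof -
    have cont: "continuous_pmap g"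
      using that phomeo continuous_pmap_pcomp by (fastforce simp: comps_def)
    show ?thesis
    proof (cases "x \<in> dom g")
      case True
      then have "S g = - dom g \<union> (dom g \<inter> pval g -` ball (pval g x) \<epsilon>)"
        by (auto simp: S_def)
      moreover have "open (dom g \<inter> pval g -` ball (pval g x) \<epsilon>)"
        using cont unfolding continuous_pmap_def by (intro continuous_open_preimage) auto
      moreover have "closed (- dom g)"
        using cont unfolding continuous_pmap_def by auto
      ultimately show ?thesis by auto
    qed (simp add: S_def)
  qed
  then show ?thesis
    unfolding ball_eq using finite_comps[OF \<open>finite \<Gamma>\<close>]
    by (cases "comps \<Gamma> n = {}") (auto intro!: sets.finite_INT)
qed

lemma map_comp_mono: "h \<subseteq>\<^sub>m h' \<Longrightarrow> g \<subseteq>\<^sub>m g' \<Longrightarrow> h \<circ>\<^sub>m g \<subseteq>\<^sub>m h' \<circ>\<^sub>m g'"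
  unfolding map_le_def map_comp_def by (fastforce simp: dom_def split: option.splits)

lemma pcomp_mono: "list_all2 (\<subseteq>\<^sub>m) hs hs' \<Longrightarrow> pcomp hs \<subseteq>\<^sub>m pcomp hs'"
  by (induction hs hs' rule: list_all2_induct) (simp_all add: pcomp_def map_comp_mono)

lemma restrict_map_le: "g |` U \<subseteq>\<^sub>m g"
  unfolding map_le_def restrict_map_def by (auto split: if_splits)

lemma comps_compacted_le_comps:
  assumes "g \<in> comps (compacted G1 K) n"
  obtains g' where "g' \<in> comps G1 n" and "g \<subseteq>\<^sub>m g'"
proof -
  obtain hs where hs: "g = pcomp hs" "set hs \<subseteq> compacted G1 K" "length hs = n"
    using assms by (auto simp: comps_def)
  have "\<forall>h\<in>set hs. \<exists>h'. h' \<in> G1 \<and> h = h' |` interior (K h')"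
    using hs(2) by (auto simp: compacted_def)
  then obtain f where f: "\<And>h. h \<in> set hs \<Longrightarrow> f h \<in> G1 \<and> h = f h |` interior (K (f h))"
    by metis
  show ?thesis
  proof
    show "pcomp (map f hs) \<in> comps G1 n"
      using f hs(3) unfolding comps_def by (intro CollectI exI[of _ "map f hs"]) auto
    have "list_all2 (\<subseteq>\<^sub>m) hs (map f hs)"
      using f by (induction hs) (simp_all, metis restrict_map_le)
    then show "g \<subseteq>\<^sub>m pcomp (map f hs)" unfolding hs(1) by (rule pcomp_mono)
  qed
qed

lemma Phi_set_subset_dyn_ball_compacted:
  assumes "\<delta> < \<delta>'"
  shows "Phi_set G1 \<delta> y \<subseteq> dyn_ball (compacted G1 K) n y \<delta>'"
proof
  fix z assume z: "z \<in> Phi_set G1 \<delta> y"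
  show "z \<in> dyn_ball (compacted G1 K) n y \<delta>'"
    unfolding dyn_ball_def
  proof (intro CollectI ballI impI)
    fix g assume g: "g \<in> comps (compacted G1 K) n" and yz: "y \<in> dom g \<and> z \<in> dom g"
    obtain g' where g': "g' \<in> comps G1 n" "g \<subseteq>\<^sub>m g'"
      using g by (rule comps_compacted_le_comps)
    then have "g' y = g y" "g' z = g z"
      using yz unfolding map_le_def by auto
    then show "dist (pval g y) (pval g z) < \<delta>'"
      using z g'(1) yz assms unfolding Phi_set_def pval_def by fastforce
  qed
qed

lemma ln_over_n_tendsto_0:
  fixes b :: "nat \<Rightarrow> real"
  assumes "a > 0" and "\<And>n. a \<le> b n" and "\<And>n. b n \<le> 1"
  shows "(\<lambda>n. - ln (b n) / real n) \<longlonglongrightarrow> 0"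
proof (rule tendsto_sandwich[of "\<lambda>_. 0" _ _ "\<lambda>n. - ln a / real n"])
  have bounds: "0 \<le> - ln (b n)" "- ln (b n) \<le> - ln a" for n
    using assms(1) assms(2,3)[of n] by auto
  show "eventually (\<lambda>n. 0 \<le> - ln (b n) / real n) sequentially"
    by (intro always_eventually allI divide_nonneg_nonneg bounds of_nat_0_le_iff)
  show "eventually (\<lambda>n. - ln (b n) / real n \<le> - ln a / real n) sequentially"
    by (intro always_eventually allI divide_right_mono bounds of_nat_0_le_iff)
qed (rule tendsto_const lim_const_over_n)+

lemma limsup_ent_term_eq_0:
  fixes \<Gamma> :: "('a::metric_space \<rightharpoonup> 'a) set"
  assumes "prob_space M" and "a > 0" and "\<And>n. a \<le> measure M (dyn_ball \<Gamma> n x \<epsilon>)"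
  shows "limsup (ent_term \<Gamma> M x \<epsilon>) = 0"
proof -
  have "ent_term \<Gamma> M x \<epsilon> = (\<lambda>n. ereal (- ln (measure M (dyn_ball \<Gamma> n x \<epsilon>)) / real n))"
  proof
    fix n
    show "ent_term \<Gamma> M x \<epsilon> n = ereal (- ln (measure M (dyn_ball \<Gamma> n x \<epsilon>)) / real n)"
      using assms(2) assms(3)[of n] by (auto simp: ent_term_def)
  qed
  moreover have "(\<lambda>n. - ln (measure M (dyn_ball \<Gamma> n x \<epsilon>)) / real n) \<longlonglongrightarrow> 0"
    using assms by (intro ln_over_n_tendsto_0 prob_space.prob_le_1)
  ultimately show ?thesis
    unfolding zero_ereal_def by (intro lim_imp_Limsup) (simp_all add: tendsto_ereal)
qed

lemma upper_local_entropy_eq_0: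
  fixes \<Gamma> :: "('a::metric_space \<rightharpoonup> 'a) set"
  assumes "prob_space M"
    and "\<And>\<epsilon>. \<epsilon> > 0 \<Longrightarrow> \<exists>a>0. \<forall>n. a \<le> measure M (dyn_ball \<Gamma> n x \<epsilon>)"
  shows "upper_local_entropy \<Gamma> M x = 0"
proof -
  have "limsup (ent_term \<Gamma> M x \<epsilon>) = 0" if "\<epsilon> > 0" for \<epsilon>
    using assms(2)[OF that] limsup_ent_term_eq_0[OF assms(1)] by blast
  then have "eventually (\<lambda>\<epsilon>. limsup (ent_term \<Gamma> M x \<epsilon>) = 0) (at_right 0)"
    by (auto intro: eventually_mono[OF eventually_at_right_less])
  then have "((\<lambda>\<epsilon>. limsup (ent_term \<Gamma> M x \<epsilon>)) \<longlongrightarrow> 0) (at_right 0)"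
    by (rule tendsto_eventually)
  then show ?thesis
    unfolding upper_local_entropy_def by (intro tendsto_Lim) auto
qed

lemma dyn_ball_measure_bounded_below_if_not_expansive:
  fixes G1 :: "('a::metric_space \<rightharpoonup> 'a) set"
  assumes "finite_measure M"
    and "\<not> expansive_measure G1 M"
    and "homogeneous_measure (compacted G1 K) M"
    and "\<And>n y \<delta>. dyn_ball (compacted G1 K) n y \<delta> \<in> sets M"
    and "\<epsilon> > 0"
  shows "\<exists>a>0. \<forall>n x. a \<le> measure M (dyn_ball (compacted G1 K) n x \<epsilon>)"
proof -
  obtain \<delta> c where "\<delta> > 0" "c > 0" and homogeneous:
    "\<And>n x y. measure M (dyn_ball (compacted G1 K) n y \<delta>) \<le>
       c * measure M (dyn_ball (compacted G1 K) n x \<epsilon>)"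
    using assms(3,5) unfolding homogeneous_measure_def by meson
  then obtain y where "measure M (Phi_set G1 (\<delta>/2) y) \<noteq> 0"
    using assms(2) unfolding expansive_measure_def by (meson half_gt_zero)
  then have Phi_pos: "measure M (Phi_set G1 (\<delta>/2) y) > 0"
    by (simp add: order_less_le)
  have "measure M (Phi_set G1 (\<delta>/2) y) / c \<le> measure M (dyn_ball (compacted G1 K) n x \<epsilon>)"
    for n x
  proof -
    have "measure M (Phi_set G1 (\<delta>/2) y) \<le> measure M (dyn_ball (compacted G1 K) n y \<delta>)"
      by (intro finite_measure.finite_measure_mono[OF assms(1)]
          Phi_set_subset_dyn_ball_compacted assms(4)) (simp add: \<open>\<delta> > 0\<close>)
    also have "\<dots> \<le> c * measure M (dyn_ball (compacted G1 K) n x \<epsilon>)"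
      by (rule homogeneous)
    finally show ?thesis
      using \<open>c > 0\<close> by (simp add: divide_le_eq mult.commute)
  qed
  then show ?thesis
    using Phi_pos \<open>c > 0\<close> by (intro exI[of _ "measure M (Phi_set G1 (\<delta>/2) y) / c"]) auto
qed

theorem mainTheorem16:
  fixes G G1 :: "('a::metric_space \<rightharpoonup> 'a) set"
    and K :: "('a \<rightharpoonup> 'a) \<Rightarrow> 'a set"
    and \<mu> :: "'a measure"
  assumes "compact (UNIV :: 'a set)"
    and "pseudogroup G"
    and "good_gen_set G G1 K"
    and "symmetric_set (compacted G1 K)"
    and "prob_space \<mu>" and "sets \<mu> = sets borel"
    and "invariant_measure G \<mu>"
    and "ergodic_measure G \<mu>"
    and "homogeneous_measure (compacted G1 K) \<mu>"
    and "\<forall>x. upper_local_entropy (compacted G1 K) \<mu> x > 0"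
  shows "expansive_measure G1 \<mu>"
proof (rule ccontr)
  assume not_expansive: "\<not> expansive_measure G1 \<mu>"
  have "finite (compacted G1 K)" and "compacted G1 K \<subseteq> {g. is_phomeo g}"
    using assms(3) by (auto simp: good_gen_set_def compacted_def generates_def)
  then have measurable: "dyn_ball (compacted G1 K) n y \<delta> \<in> sets \<mu>" for n y \<delta>
    using assms(6) by (simp add: dyn_ball_in_borel)
  have "\<exists>a>0. \<forall>n x. a \<le> measure \<mu> (dyn_ball (compacted G1 K) n x \<epsilon>)" if "\<epsilon> > 0" for \<epsilon>
    using prob_space.finite_measure[OF assms(5)] not_expansive assms(9) measurable that
    by (rule dyn_ball_measure_bounded_below_if_not_expansive)
  then have "upper_local_entropy (compacted G1 K) \<mu> x = 0" for x
    by (intro upper_local_entropy_eq_0[OF assms(5)]) meson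
  with assms(10) show False by (metis less_irrefl)
qed

end
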